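(* Let $\rho\in(0,1)$, $\xi\in\mathbb{R}$, and $H=\frac{1}{2(1-\rho\cos x)}\big(\sin^2x\,(P_x^2+P_y^2)+\xi\big)$ on $(x,y)\in(0,\pi)\times\mathbb{R}$. On a level set $H=E\ne0$, $P_y=L>0$, set $\sigma=\frac1\rho\big(\frac{\xi}{2E}-1\big)$ and $\eta=\frac{\rho E}{L^2}$, and suppose $\eta>0$ and $\sigma=-\cosh\theta\le-1$. Then the projections to the $(x,y)$-plane of the trajectories of the Hamiltonian flow on this level set, normalized by a translation in $y$, are: (a) if $\eta\in(0,e^{-\theta})$: $\cosh y=\frac{\cos x-\eta}{\sqrt{\eta^2+2\sigma\eta+1}}$ for $x\in(0,x_-)$, and $\cosh y=\frac{\eta-\cos x}{\sqrt{\eta^2+2\sigma\eta+1}}$ for $x\in(x_+,\pi)$, where $\cos x_\pm=\eta\mp\sqrt{\eta^2+2\sigma\eta+1}$; (b) if $\eta\in(e^{-\theta},+\infty)$: $e^{\epsilon y_\epsilon}=\dfrac{\eta-\cos x+\sqrt{2\eta(|\sigma|-\cos x)-\sin^2x}}{\eta-1+\sqrt{2\eta(|\sigma|-1)}}$ for $x\in(0,\pi)$; (c) if $\eta=e^{-\theta}=\cos x_*$: $e^{\epsilon y_\epsilon}=\frac{\cos x-\cos x_*}{1-\cos x_*}$ for $x\in(0,x_* )$ and $e^{\epsilon y_\epsilon}=\frac{\cos x_*-\cos x}{\cos x_*+1}$ for $x\in(x_*,\pi)$; where $\epsilon=\pm1$ labels the two families of trajectories $y_\epsilon$.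
   Context: Trajectories are solutions of Hamilton's equations of $H$; because $H$ is invariant under $y\mapsto y+c$, each trajectory is given up to a translation of $y$, fixed here by taking $y=0$ at a turning point or at an endpoint $x\to0^+$ or $x\to\pi^-$ of the $x$-interval. *)

theory Defs
  imports "HOL-Analysis.Analysis"
begin

definition Ham :: "real \<Rightarrow> real \<Rightarrow> real \<Rightarrow> real \<Rightarrow> real \<Rightarrow> real \<Rightarrow> real" where
  "Ham \<rho> \<xi> x y px py = (sin x ^ 2 * (px ^ 2 + py ^ 2) + \<xi>) / (2 * (1 - \<rho> * cos x))"

definition hamiltonian_trajectory ::
  "(real \<Rightarrow> real \<Rightarrow> real \<Rightarrow> real \<Rightarrow> real) \<Rightarrow> real set \<Rightarrow>
   (real \<Rightarrow> real) \<Rightarrow> (real \<Rightarrow> real) \<Rightarrow> (real \<Rightarrow> real) \<Rightarrow> (real \<Rightarrow> real) \<Rightarrow> bool" where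
  "hamiltonian_trajectory H I x y px py \<longleftrightarrow> open I \<and> is_interval I \<and>
     (\<forall>t\<in>I.
        (x has_real_derivative deriv (\<lambda>p. H (x t) (y t) p (py t)) (px t)) (at t) \<and>
        (y has_real_derivative deriv (\<lambda>q. H (x t) (y t) (px t) q) (py t)) (at t) \<and>
        (px has_real_derivative - deriv (\<lambda>u. H u (y t) (px t) (py t)) (x t)) (at t) \<and>
        (py has_real_derivative - deriv (\<lambda>v. H (x t) v (px t) (py t)) (y t)) (at t))"

end

theory Submission
  imports Defs
begin

text \<open>With the rescaled momentum \<open>P = sin x P\<^sub>x / L\<close>, the energy relation reads
  \<open>P\<^sup>2 = (cos x - \<eta>)\<^sup>2 - D\<close> with \<open>D = \<eta>\<^sup>2 + 2\<sigma>\<eta> + 1 = (\<eta> - e\<^sup>\<theta>)(\<eta> - e\<^sup>-\<^sup>\<theta>)\<close>, and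
  Hamilton's equations show that \<open>N\<^sub>\<plusminus> = \<eta> - cos x \<plusminus> P\<close> satisfies \<open>N\<^sub>\<plusminus>' = \<plusminus>y' N\<^sub>\<plusminus>\<close>,
  so \<open>N\<^sub>\<plusminus> = C\<^sub>\<plusminus> e\<^sup>\<plusminus>\<^sup>y\<close> along a trajectory, with \<open>N\<^sub>+ N\<^sub>- = D\<close> and \<open>N\<^sub>+ + N\<^sub>- = 2(\<eta> - cos x)\<close>.
  The three cases are the sign of \<open>D\<close>: for \<open>D > 0\<close> the sum \<open>C\<^sub>+e\<^sup>y + C\<^sub>-e\<^sup>-\<^sup>y\<close> is a multiple of
  \<open>cosh (y + c)\<close>; for \<open>D = 0\<close> one of \<open>C\<^sub>\<plusminus>\<close> vanishes; otherwise \<open>P\<close> never vanishes, keeps its sign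
  by continuity, and the corresponding \<open>N\<^sub>\<epsilon> = \<eta> - cos x + |P|\<close> is positive.\<close>

lemma deriv_Ham_px:
  assumes "1 - \<rho> * cos a \<noteq> 0"
  shows "deriv (\<lambda>p. Ham \<rho> \<xi> a b p q) p0 = sin a ^ 2 * p0 / (1 - \<rho> * cos a)"
proof -
  obtain M where M: "M = 1 - \<rho> * cos a" "M \<noteq> 0" using assms by blast
  have "((\<lambda>p. Ham \<rho> \<xi> a b p q) has_real_derivative sin a ^ 2 * p0 / M) (at p0)"
    unfolding Ham_def
    apply (rule derivative_eq_intros refl)+
    unfolding M(1)[symmetric] using M(2) by (auto simp: field_simps power2_eq_square)
  thus ?thesis using M(1) by (simp add: DERIV_imp_deriv)
qed

lemma deriv_Ham_py:
  assumes "1 - \<rho> * cos a \<noteq> 0"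
  shows "deriv (\<lambda>q. Ham \<rho> \<xi> a b p q) q0 = sin a ^ 2 * q0 / (1 - \<rho> * cos a)"
proof -
  obtain M where M: "M = 1 - \<rho> * cos a" "M \<noteq> 0" using assms by blast
  have "((\<lambda>q. Ham \<rho> \<xi> a b p q) has_real_derivative sin a ^ 2 * q0 / M) (at q0)"
    unfolding Ham_def
    apply (rule derivative_eq_intros refl)+
    unfolding M(1)[symmetric] using M(2) by (auto simp: field_simps power2_eq_square)
  thus ?thesis using M(1) by (simp add: DERIV_imp_deriv)
qed

lemma deriv_Ham_x:
  assumes "1 - \<rho> * cos a \<noteq> 0"
  shows "deriv (\<lambda>u. Ham \<rho> \<xi> u b p q) a =
     (sin a * cos a * (p^2 + q^2) - \<rho> * sin a * Ham \<rho> \<xi> a b p q) / (1 - \<rho> * cos a)"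
proof -
  obtain M where M: "M = 1 - \<rho> * cos a" "M \<noteq> 0" using assms by blast
  have "((\<lambda>u. Ham \<rho> \<xi> u b p q) has_real_derivative
     (sin a * cos a * (p^2 + q^2) - \<rho> * sin a * Ham \<rho> \<xi> a b p q) / M) (at a)"
    unfolding Ham_def
    apply (rule derivative_eq_intros refl)+
    unfolding M(1)[symmetric] using M(2) by (auto simp: field_simps power2_eq_square)
  thus ?thesis using M(1) by (simp add: DERIV_imp_deriv)
qed

lemma continuous_nonvanishing_sign:
  fixes f :: "real \<Rightarrow> real"
  assumes "is_interval I" "continuous_on I f" "\<forall>t\<in>I. f t \<noteq> 0"
  shows "(\<forall>t\<in>I. 0 < f t) \<or> (\<forall>t\<in>I. f t < 0)"
proof (rule ccontr)
  assume "\<not> ?thesis"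
  then obtain a b where ab: "a \<in> I" "b \<in> I" "f a \<le> 0" "0 \<le> f b" by (auto simp: not_less)
  have "is_interval (f ` I)"
    using assms(1,2) connected_continuous_image is_interval_connected_1 by blast
  hence "0 \<in> f ` I" using ab by (meson imageI mem_is_interval_1_I)
  thus False using assms(3) by auto
qed

lemma linear_ode_exp_solution:
  fixes f g g' :: "real \<Rightarrow> real"
  assumes "convex I"
    and f: "\<And>t. t \<in> I \<Longrightarrow> (f has_real_derivative k * g' t * f t) (at t)"
    and g: "\<And>t. t \<in> I \<Longrightarrow> (g has_real_derivative g' t) (at t)"
  shows "\<exists>C. \<forall>t\<in>I. f t = C * exp (k * g t)"
proof -
  have "\<exists>C. \<forall>t\<in>I. f t * exp (- k * g t) = C"
  proof (rule has_field_derivative_zero_constant[OF assms(1)])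
    fix t assume t: "t \<in> I"
    have "((\<lambda>t. f t * exp (- k * g t)) has_real_derivative 0) (at t)"
      by (rule derivative_eq_intros f[OF t] g[OF t] refl)+ (simp add: algebra_simps)
    thus "((\<lambda>t. f t * exp (- k * g t)) has_real_derivative 0) (at t within I)"
      by (rule has_field_derivative_at_within)
  qed
  then obtain C where "\<forall>t\<in>I. f t * exp (- k * g t) = C" by blast
  hence "\<forall>t\<in>I. f t = C * exp (k * g t)"
    by (metis exp_minus_inverse mult.assoc mult.commute mult_1 mult_minus_left)
  thus ?thesis by blast
qed

lemma exp_solution_normalize:
  fixes f g :: "real \<Rightarrow> real"
  assumes "s \<noteq> 0" "\<forall>t\<in>I. f t = C * exp (s * g t)" "\<forall>t\<in>I. 0 < f t / K"
  shows "\<exists>c. \<forall>t\<in>I. exp (s * (g t + c)) = f t / K"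
proof (cases "I = {}")
  case False
  then obtain t0 where t0: "t0 \<in> I" by blast
  have "0 < C / K * exp (s * g t0)" using assms(2,3) t0 by (metis times_divide_eq_left)
  hence CK: "0 < C / K" by (rule zero_less_mult_pos2) simp
  have "exp (s * (g t + ln (C / K) / s)) = f t / K" if "t \<in> I" for t
    using assms(1,2) that CK by (simp add: distrib_left exp_add)
  thus ?thesis by blast
qed simp

lemma add_sqrt_pos:
  fixes u D :: real
  assumes "D \<le> u\<^sup>2" "D < 0 \<or> 0 < u"
  shows "0 < u + sqrt (u\<^sup>2 - D)"
proof (cases "D < 0")
  case True
  hence "sqrt (u\<^sup>2) < sqrt (u\<^sup>2 - D)" by (intro real_sqrt_less_mono) simp
  thus ?thesis by simp
next
  case False
  moreover have "0 \<le> sqrt (u\<^sup>2 - D)" using assms(1) by simp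
  ultimately show ?thesis using assms(2) by linarith
qed

lemma exp_combination_cosh:
  fixes C1 C2 :: real
  assumes "0 < C1 * C2"
  shows "\<exists>c. \<forall>z. C1 * exp z + C2 * exp (- z) = sgn C1 * 2 * sqrt (C1 * C2) * cosh (z + c)"
proof -
  define r where "r = sqrt (C1 * C2)"
  define a where "a = \<bar>C1\<bar> / r"
  have r: "0 < r" "r * r = C1 * C2" using assms unfolding r_def by simp_all
  have C1: "C1 \<noteq> 0" using assms by auto
  have a: "0 < a" "exp (ln a) = a" using r C1 unfolding a_def by simp_all
  have "C1 * exp z + C2 * exp (- z) = sgn C1 * 2 * r * cosh (z + ln a)" for z
  proof -
    have "sgn C1 * 2 * r * cosh (z + ln a) = sgn C1 * r * (a * exp z + exp (- z) / a)"
      using a by (simp add: cosh_def exp_add exp_diff exp_minus field_simps)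
    also have "\<dots> = C1 * exp z + C2 * exp (- z)"
      using r C1 unfolding a_def by (auto simp: sgn_if field_simps)
    finally show ?thesis by simp
  qed
  thus ?thesis unfolding r_def by blast
qed

lemma cosh_quadratic_factor:
  fixes \<eta> \<theta> :: real
  shows "\<eta>\<^sup>2 - 2 * cosh \<theta> * \<eta> + 1 = (\<eta> - exp \<theta>) * (\<eta> - exp (- \<theta>))"
  by (simp add: cosh_def exp_minus field_simps power2_eq_square)

lemma cosh_quadratic_neg_or_gt_one:
  fixes \<eta> \<theta> :: real
  assumes "0 \<le> \<theta>" "exp (- \<theta>) < \<eta>"
  shows "(\<eta> - exp \<theta>) * (\<eta> - exp (- \<theta>)) < 0 \<or> 1 < \<eta>"
proof (cases "\<eta> < exp \<theta>")
  case False
  have "exp (- \<theta>) \<le> 1" "1 \<le> exp \<theta>" using assms(1) by auto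
  moreover have "\<eta> \<noteq> 1" using False assms by auto
  ultimately show ?thesis using False by linarith
qed (use assms(2) in \<open>simp add: mult_neg_pos\<close>)

locale Ham_level_trajectory =
  fixes \<rho> \<xi> E L :: real and I :: "real set" and x y px py :: "real \<Rightarrow> real"
  assumes rho: "0 < \<rho>" "\<rho> < 1"
    and E: "E \<noteq> 0"
    and L: "L > 0"
    and traj: "hamiltonian_trajectory (Ham \<rho> \<xi>) I x y px py"
    and dom: "\<forall>t\<in>I. 0 < x t \<and> x t < pi"
    and level: "\<forall>t\<in>I. Ham \<rho> \<xi> (x t) (y t) (px t) (py t) = E \<and> py t = L"
begin

definition \<sigma> :: real where "\<sigma> = (\<xi> / (2 * E) - 1) / \<rho>"
definition \<eta> :: real where "\<eta> = \<rho> * E / L ^ 2"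
definition D :: real where "D = \<eta> ^ 2 + 2 * \<sigma> * \<eta> + 1"

definition P :: "real \<Rightarrow> real" where "P t = sin (x t) * px t / L"
definition N :: "real \<Rightarrow> real \<Rightarrow> real" where "N s t = \<eta> - cos (x t) + s * P t"

abbreviation M :: "real \<Rightarrow> real" where "M t \<equiv> 1 - \<rho> * cos (x t)"

lemma is_interval_I: "is_interval I"
  using traj by (simp add: hamiltonian_trajectory_def)

lemma M_pos: "0 < M t"
proof -
  have "\<rho> * cos (x t) \<le> \<rho>" using rho by (intro mult_left_le) auto
  thus ?thesis using rho by linarith
qed

lemma cos_x_bounds:
  assumes "t \<in> I"
  shows "-1 < cos (x t)" "cos (x t) < 1" "arccos (cos (x t)) = x t"
proof -
  have x: "0 < x t" "x t < pi" using dom assms by auto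
  hence "0 < sin (x t)" by (rule sin_gt_zero)
  hence "0 < sin (x t) ^ 2" by simp
  hence "cos (x t) ^ 2 < 1" using sin_squared_eq[of "x t"] by linarith
  thus "-1 < cos (x t)" "cos (x t) < 1" by (auto simp: abs_square_less_1 abs_less_iff)
  show "arccos (cos (x t)) = x t" using x by (intro arccos_cos) auto
qed

lemma equations_of_motion:
  assumes "t \<in> I"
  shows "(x has_real_derivative sin (x t) ^ 2 * px t / M t) (at t)"
    and "(y has_real_derivative sin (x t) ^ 2 * L / M t) (at t)"
    and "(px has_real_derivative
           sin (x t) * (\<eta> * L ^ 2 - cos (x t) * (px t ^ 2 + L ^ 2)) / M t) (at t)"
proof -
  have M: "M t \<noteq> 0" using M_pos[of t] by simp
  have H: "Ham \<rho> \<xi> (x t) (y t) (px t) L = E" "py t = L" using level assms by auto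
  have "\<rho> * E = \<eta> * L ^ 2" using L by (simp add: \<eta>_def)
  hence \<eta>L: "\<rho> * (sin (x t) * E) = sin (x t) * (\<eta> * L ^ 2)" by (metis mult.left_commute)
  have "(x has_real_derivative deriv (\<lambda>p. Ham \<rho> \<xi> (x t) (y t) p L) (px t)) (at t) \<and>
        (y has_real_derivative deriv (\<lambda>q. Ham \<rho> \<xi> (x t) (y t) (px t) q) L) (at t) \<and>
        (px has_real_derivative - deriv (\<lambda>u. Ham \<rho> \<xi> u (y t) (px t) L) (x t)) (at t)"
    using traj assms H(2) unfolding hamiltonian_trajectory_def by auto
  thus "(x has_real_derivative sin (x t) ^ 2 * px t / M t) (at t)"
    and "(y has_real_derivative sin (x t) ^ 2 * L / M t) (at t)"
    and "(px has_real_derivative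
           sin (x t) * (\<eta> * L ^ 2 - cos (x t) * (px t ^ 2 + L ^ 2)) / M t) (at t)"
    by (simp_all add: deriv_Ham_px[OF M] deriv_Ham_py[OF M] deriv_Ham_x[OF M] H(1) \<eta>L
        minus_divide_left right_diff_distrib mult.assoc)
qed

lemma P_square:
  assumes "t \<in> I"
  shows "P t ^ 2 = (cos (x t) - \<eta>) ^ 2 - D"
proof -
  have "Ham \<rho> \<xi> (x t) (y t) (px t) L = E" using level assms by auto
  hence "(sin (x t) * px t) ^ 2 = (2 * E * M t - \<xi>) - L ^ 2 * sin (x t) ^ 2"
    using M_pos[of t] by (simp add: Ham_def field_simps power_mult_distrib)
  also have "2 * E * M t - \<xi> = -2 * (\<rho> * E) * (\<sigma> + cos (x t))"
    using rho E by (simp add: \<sigma>_def field_simps)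
  also have "\<rho> * E = \<eta> * L ^ 2"
    using L by (simp add: \<eta>_def)
  finally have "P t ^ 2 = -2 * \<eta> * (\<sigma> + cos (x t)) - sin (x t) ^ 2"
    using L by (simp add: P_def power_divide field_simps)
  thus ?thesis unfolding D_def sin_squared_eq by (simp add: algebra_simps power2_eq_square)
qed

lemma N_product: "t \<in> I \<Longrightarrow> N 1 t * N (-1) t = D"
  using P_square[of t] unfolding N_def by (simp add: algebra_simps power2_eq_square)

lemma N_sum: "N 1 t + N (-1) t = 2 * (\<eta> - cos (x t))"
  unfolding N_def by simp

lemma N_has_derivative:
  assumes "t \<in> I" "s \<in> {-1, 1}"
  shows "(N s has_real_derivative s * (sin (x t) ^ 2 * L / M t) * N s t) (at t)"
proof -
  obtain m where m: "M t = m" "m \<noteq> 0" using M_pos[of t] by auto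
  have L0: "L \<noteq> 0" using L by auto
  show ?thesis
    unfolding N_def[abs_def] P_def
    apply (rule derivative_eq_intros equations_of_motion[OF assms(1)] refl L0)+
    unfolding m(1) using assms(2) m(2) L0 by (auto simp: field_simps power2_eq_square)
qed

lemma N_exp:
  assumes "s \<in> {-1, 1}"
  shows "\<exists>C. \<forall>t\<in>I. N s t = C * exp (s * y t)"
proof (rule linear_ode_exp_solution)
  show "convex I" using is_interval_I by (simp add: is_interval_convex)
qed (use N_has_derivative[OF _ assms] equations_of_motion(2) in auto)

lemma arccos_le_x_iff:
  assumes "t \<in> I" "\<bar>a\<bar> \<le> 1"
  shows "arccos a \<le> x t \<longleftrightarrow> cos (x t) \<le> a"
  using arccos_le_mono[of a "cos (x t)"] cos_x_bounds[OF assms(1)] assms(2) by simp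

lemma x_le_arccos_iff:
  assumes "t \<in> I" "\<bar>a\<bar> \<le> 1"
  shows "x t \<le> arccos a \<longleftrightarrow> a \<le> cos (x t)"
  using arccos_le_mono[of "cos (x t)" a] cos_x_bounds[OF assms(1)] assms(2) by simp

lemma continuous_on_x: "continuous_on I x"
  and continuous_on_px: "continuous_on I px"
  using equations_of_motion(1,3) by (auto intro!: continuous_at_imp_continuous_on DERIV_isCont)

lemma continuous_on_P: "continuous_on I P"
  unfolding P_def[abs_def] using L
  by (intro continuous_intros continuous_on_x continuous_on_px) auto

lemma N_exp_pair:
  obtains C1 C2 where "\<forall>t\<in>I. N 1 t = C1 * exp (y t)" "\<forall>t\<in>I. N (-1) t = C2 * exp (- y t)"
  using N_exp[of 1] N_exp[of "-1"] by auto

lemma level_curve_cosh: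
  assumes "0 < \<eta>" "\<eta> \<le> 1" "0 < D"
  shows "\<exists>c. (\<forall>t\<in>I. x t \<le> arccos (\<eta> + sqrt D) \<and> cosh (y t + c) = (cos (x t) - \<eta>) / sqrt D) \<or>
             (\<forall>t\<in>I. arccos (\<eta> - sqrt D) \<le> x t \<and> cosh (y t + c) = (\<eta> - cos (x t)) / sqrt D)"
proof (cases "I = {}")
  case False
  then obtain t0 where t0: "t0 \<in> I" by blast
  obtain C1 C2 where C1: "\<forall>t\<in>I. N 1 t = C1 * exp (y t)" and C2: "\<forall>t\<in>I. N (-1) t = C2 * exp (- y t)"
    by (rule N_exp_pair)
  have "C1 * C2 = D"
    using N_product[OF t0] C1 C2 t0 by (simp add: exp_minus field_simps)
  then obtain c where c: "\<forall>z. C1 * exp z + C2 * exp (- z) = sgn C1 * 2 * sqrt D * cosh (z + c)"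
    using exp_combination_cosh assms(3) by metis
  have eq: "\<eta> - cos (x t) = sgn C1 * sqrt D * cosh (y t + c)" if "t \<in> I" for t
  proof -
    have "2 * (\<eta> - cos (x t)) = C1 * exp (y t) + C2 * exp (- y t)"
      using N_sum[of t] C1 C2 that by simp
    also have "\<dots> = 2 * (sgn C1 * sqrt D * cosh (y t + c))"
      using c by simp
    finally show ?thesis by simp
  qed
  have sD: "0 < sqrt D" using assms(3) by simp
  have "C1 \<noteq> 0" using \<open>C1 * C2 = D\<close> assms(3) by auto
  then consider "0 < C1" | "C1 < 0" by linarith
  thus ?thesis
  proof cases
    case 1
    have "arccos (\<eta> - sqrt D) \<le> x t \<and> cosh (y t + c) = (\<eta> - cos (x t)) / sqrt D" if t: "t \<in> I" for t
    proof -
      have ch: "cosh (y t + c) = (\<eta> - cos (x t)) / sqrt D" using eq[OF t] 1 sD by simp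
      hence "cos (x t) \<le> \<eta> - sqrt D" using cosh_real_ge_1[of "y t + c"] sD by (simp add: field_simps)
      moreover have "\<bar>\<eta> - sqrt D\<bar> \<le> 1" using calculation cos_x_bounds[OF t] assms sD by linarith
      ultimately show ?thesis using arccos_le_x_iff[OF t] ch by blast
    qed
    thus ?thesis by blast
  next
    case 2
    have "x t \<le> arccos (\<eta> + sqrt D) \<and> cosh (y t + c) = (cos (x t) - \<eta>) / sqrt D" if t: "t \<in> I" for t
    proof -
      have ch: "cosh (y t + c) = (cos (x t) - \<eta>) / sqrt D" using eq[OF t] 2 sD by (simp add: field_simps)
      hence "\<eta> + sqrt D \<le> cos (x t)" using cosh_real_ge_1[of "y t + c"] sD by (simp add: field_simps)
      moreover have "\<bar>\<eta> + sqrt D\<bar> \<le> 1" using calculation cos_x_bounds[OF t] assms sD by linarith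
      ultimately show ?thesis using x_le_arccos_iff[OF t] ch by blast
    qed
    thus ?thesis by blast
  qed
qed simp

lemma radicand_eq:
  assumes "\<sigma> \<le> 0"
  shows "2 * \<eta> * (\<bar>\<sigma>\<bar> - c) - (1 - c\<^sup>2) = (c - \<eta>)\<^sup>2 - D"
  using assms by (simp add: D_def algebra_simps power2_eq_square)

lemma P_square_pos:
  assumes "t \<in> I" "0 < \<eta>" "\<sigma> \<le> -1" "D < 0 \<or> 1 < \<eta>"
  shows "0 < P t ^ 2"
  using assms(4)
proof
  assume "1 < \<eta>"
  have "0 < (1 - cos (x t)) * (2 * \<eta> - 1 - cos (x t))"
    using cos_x_bounds[OF assms(1)] \<open>1 < \<eta>\<close> by (intro mult_pos_pos) auto
  also have "\<dots> \<le> 2 * \<eta> * (\<bar>\<sigma>\<bar> - cos (x t)) - (1 - (cos (x t))\<^sup>2)"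
    using mult_nonneg_nonneg[of \<eta> "- \<sigma> - 1"] assms(2,3)
    by (simp add: algebra_simps power2_eq_square)
  also have "\<dots> = P t ^ 2"
    using radicand_eq[of "cos (x t)"] assms(3) P_square[OF assms(1)] by simp
  finally show ?thesis .
qed (use P_square[OF assms(1)] zero_le_power2[of "cos (x t) - \<eta>"] in linarith)

lemma level_curve_exp:
  assumes "0 < \<eta>" "\<sigma> \<le> -1" "D < 0 \<or> 1 < \<eta>"
  shows "\<exists>\<epsilon>\<in>{-1, 1}. \<exists>c. \<forall>t\<in>I. exp (\<epsilon> * (y t + c)) =
           (\<eta> - cos (x t) + sqrt (2 * \<eta> * (\<bar>\<sigma>\<bar> - cos (x t)) - sin (x t) ^ 2))
           / (\<eta> - 1 + sqrt (2 * \<eta> * (\<bar>\<sigma>\<bar> - 1)))"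
proof -
  define K where "K = \<eta> - 1 + sqrt (2 * \<eta> * (\<bar>\<sigma>\<bar> - 1))"
  have radicand: "2 * \<eta> * (\<bar>\<sigma>\<bar> - c) - (1 - c\<^sup>2) = (c - \<eta>)\<^sup>2 - D" for c
    using assms(2) by (intro radicand_eq) simp
  have P_sq: "2 * \<eta> * (\<bar>\<sigma>\<bar> - cos (x t)) - sin (x t) ^ 2 = P t ^ 2" if "t \<in> I" for t
    using radicand[of "cos (x t)"] P_square[OF that] by (simp add: sin_squared_eq)
  obtain s where s: "s \<in> {-1, 1}" and sP: "\<forall>t\<in>I. 0 < s * P t"
  proof -
    have "\<forall>t\<in>I. P t \<noteq> 0" using P_square_pos assms by fastforce
    with continuous_nonvanishing_sign[OF is_interval_I continuous_on_P]
    consider "\<forall>t\<in>I. 0 < P t" | "\<forall>t\<in>I. P t < 0" by blast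
    thus ?thesis using that[of 1] that[of "-1"] by cases auto
  qed
  have N_eq: "N s t = \<eta> - cos (x t) + sqrt (2 * \<eta> * (\<bar>\<sigma>\<bar> - cos (x t)) - sin (x t) ^ 2)"
    if t: "t \<in> I" for t
    using sP t s by (auto simp: N_def P_sq[OF t])
  have N_pos: "0 < N s t" if t: "t \<in> I" for t
  proof -
    have "0 < (\<eta> - cos (x t)) + sqrt ((\<eta> - cos (x t))\<^sup>2 - D)"
      using P_square[OF t] zero_le_power2[of "P t"] assms(3) cos_x_bounds[OF t]
      by (intro add_sqrt_pos) (auto simp: power2_commute)
    thus ?thesis using N_eq[OF t] P_sq[OF t] P_square[OF t] by (simp add: power2_commute)
  qed
  have "0 < K"
  proof -
    have "0 \<le> 2 * \<eta> * (\<bar>\<sigma>\<bar> - 1)" using assms(1,2) by simp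
    hence "0 < (\<eta> - 1) + sqrt ((\<eta> - 1)\<^sup>2 - D)"
      using radicand[of 1] assms(3) by (intro add_sqrt_pos) (auto simp: power2_commute)
    thus ?thesis using radicand[of 1] by (simp add: K_def power2_commute)
  qed
  with N_pos have "\<forall>t\<in>I. 0 < N s t / K" by simp
  moreover obtain C where "\<forall>t\<in>I. N s t = C * exp (s * y t)" using N_exp[OF s] by blast
  moreover have "s \<noteq> 0" using s by auto
  ultimately obtain c where "\<forall>t\<in>I. exp (s * (y t + c)) = N s t / K"
    using exp_solution_normalize by metis
  hence "\<forall>t\<in>I. exp (s * (y t + c)) =
           (\<eta> - cos (x t) + sqrt (2 * \<eta> * (\<bar>\<sigma>\<bar> - cos (x t)) - sin (x t) ^ 2)) / K"
    using N_eq by simp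
  thus ?thesis using s unfolding K_def by blast
qed

lemma level_curve_separatrix:
  assumes "0 < \<eta>" "\<eta> \<le> 1" "D = 0" "\<forall>t\<in>I. x t \<noteq> arccos \<eta>"
  shows "\<exists>\<epsilon>\<in>{-1, 1}. \<exists>c.
           (\<forall>t\<in>I. x t < arccos \<eta> \<and>
              exp (\<epsilon> * (y t + c)) = (cos (x t) - cos (arccos \<eta>)) / (1 - cos (arccos \<eta>))) \<or>
           (\<forall>t\<in>I. arccos \<eta> < x t \<and>
              exp (\<epsilon> * (y t + c)) = (cos (arccos \<eta>) - cos (x t)) / (cos (arccos \<eta>) + 1))"
proof -
  have \<eta>: "\<bar>\<eta>\<bar> \<le> 1" "cos (arccos \<eta>) = \<eta>" using assms(1,2) by auto
  obtain s C where s: "s \<in> {-1, 1}" and C: "\<forall>t\<in>I. \<eta> - cos (x t) = C * exp (s * y t)"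
  proof -
    obtain C1 C2 where C1: "\<forall>t\<in>I. N 1 t = C1 * exp (y t)" and C2: "\<forall>t\<in>I. N (-1) t = C2 * exp (- y t)"
      by (rule N_exp_pair)
    have half_sum: "\<eta> - cos (x t) = (N 1 t + N (-1) t) / 2" for t
      by (simp add: N_sum)
    show ?thesis
    proof (cases "C1 = 0")
      case True
      show ?thesis by (rule that[of "-1" "C2 / 2"]) (use C1 C2 True in \<open>simp_all add: half_sum\<close>)
    next
      case False
      have "N (-1) t = 0" if "t \<in> I" for t
        using N_product[OF that] C1 that False assms(3) by simp
      thus ?thesis by (intro that[of 1 "C1 / 2"]) (use C1 in \<open>simp_all add: half_sum\<close>)
    qed
  qed
  have s_nonzero: "s \<noteq> 0" using s by auto
  have "\<forall>t\<in>I. \<eta> - cos (x t) \<noteq> 0"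
    using assms(4) cos_x_bounds by force
  moreover have "continuous_on I (\<lambda>t. \<eta> - cos (x t))"
    by (intro continuous_intros continuous_on_x)
  ultimately consider "\<forall>t\<in>I. 0 < \<eta> - cos (x t)" | "\<forall>t\<in>I. \<eta> - cos (x t) < 0"
    using continuous_nonvanishing_sign[OF is_interval_I] by blast
  thus ?thesis
  proof cases
    case 1
    have "\<forall>t\<in>I. 0 < (\<eta> - cos (x t)) / (\<eta> + 1)"
      using 1 assms(1) by simp
    then obtain c where "\<forall>t\<in>I. exp (s * (y t + c)) = (\<eta> - cos (x t)) / (\<eta> + 1)"
      using exp_solution_normalize[OF s_nonzero C] by blast
    moreover have "\<forall>t\<in>I. arccos \<eta> < x t"
      using 1 x_le_arccos_iff[OF _ \<eta>(1)] by (simp add: not_le[symmetric])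
    ultimately have "\<forall>t\<in>I. arccos \<eta> < x t \<and>
        exp (s * (y t + c)) = (cos (arccos \<eta>) - cos (x t)) / (cos (arccos \<eta>) + 1)"
      using \<eta>(2) by simp
    thus ?thesis using s by blast
  next
    case 2
    have C': "\<forall>t\<in>I. cos (x t) - \<eta> = - C * exp (s * y t)"
      using C by (metis minus_diff_eq mult_minus_left)
    have "\<forall>t\<in>I. 0 < (cos (x t) - \<eta>) / (1 - \<eta>)"
      using 2 cos_x_bounds by (force intro: divide_pos_pos)
    then obtain c where "\<forall>t\<in>I. exp (s * (y t + c)) = (cos (x t) - \<eta>) / (1 - \<eta>)"
      using exp_solution_normalize[OF s_nonzero C'] by blast
    moreover have "\<forall>t\<in>I. x t < arccos \<eta>"
    proof
      fix t assume t: "t \<in> I"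
      have "\<eta> < cos (x t)" using 2 t by simp
      hence "x t \<le> arccos \<eta>" using x_le_arccos_iff[OF t \<eta>(1)] by simp
      thus "x t < arccos \<eta>" using assms(4) t by (simp add: le_less)
    qed
    ultimately have "\<forall>t\<in>I. x t < arccos \<eta> \<and>
        exp (s * (y t + c)) = (cos (x t) - cos (arccos \<eta>)) / (1 - cos (arccos \<eta>))"
      using \<eta>(2) by simp
    thus ?thesis using s by blast
  qed
qed

end

theorem proposition5:
  fixes \<rho> \<xi> E L \<theta> :: real
    and I :: "real set"
    and x y px py :: "real \<Rightarrow> real"
  assumes rho: "0 < \<rho>" "\<rho> < 1"
    and E: "E \<noteq> 0"
    and L: "L > 0"
    and traj: "hamiltonian_trajectory (Ham \<rho> \<xi>) I x y px py"
    and dom: "\<forall>t\<in>I. 0 < x t \<and> x t < pi"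
    and level: "\<forall>t\<in>I. Ham \<rho> \<xi> (x t) (y t) (px t) (py t) = E \<and> py t = L"
    and eta_pos: "\<rho> * E / L ^ 2 > 0"
    and theta: "\<theta> \<ge> 0" "(\<xi> / (2 * E) - 1) / \<rho> = - cosh \<theta>"
  shows
   "(let \<sigma> = (\<xi> / (2 * E) - 1) / \<rho>; \<eta> = \<rho> * E / L ^ 2;
         D = \<eta> ^ 2 + 2 * \<sigma> * \<eta> + 1;
         xm = arccos (\<eta> + sqrt D); xp = arccos (\<eta> - sqrt D); xs = arccos \<eta>
     in
      (\<eta> < exp (- \<theta>) \<longrightarrow>
         (\<exists>c. (\<forall>t\<in>I. x t \<le> xm \<and> cosh (y t + c) = (cos (x t) - \<eta>) / sqrt D) \<or>
              (\<forall>t\<in>I. xp \<le> x t \<and> cosh (y t + c) = (\<eta> - cos (x t)) / sqrt D))) \<and>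
      (\<eta> > exp (- \<theta>) \<longrightarrow>
         (\<exists>\<epsilon>\<in>{-1, 1}. \<exists>c. \<forall>t\<in>I.
            exp (\<epsilon> * (y t + c)) =
              (\<eta> - cos (x t) + sqrt (2 * \<eta> * (\<bar>\<sigma>\<bar> - cos (x t)) - sin (x t) ^ 2))
              / (\<eta> - 1 + sqrt (2 * \<eta> * (\<bar>\<sigma>\<bar> - 1))))) \<and>
      (\<eta> = exp (- \<theta>) \<longrightarrow> (\<forall>t\<in>I. x t \<noteq> xs) \<longrightarrow>
         (\<exists>\<epsilon>\<in>{-1, 1}. \<exists>c.
            (\<forall>t\<in>I. x t < xs \<and> exp (\<epsilon> * (y t + c)) = (cos (x t) - cos xs) / (1 - cos xs)) \<or>
            (\<forall>t\<in>I. xs < x t \<and> exp (\<epsilon> * (y t + c)) = (cos xs - cos (x t)) / (cos xs + 1)))))"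
proof -
  interpret Ham_level_trajectory \<rho> \<xi> E L I x y px py
    using rho E L traj dom level by unfold_locales
  have \<sigma>: "\<sigma> = - cosh \<theta>" using theta(2) by (simp add: \<sigma>_def)
  have \<eta>: "0 < \<eta>" using eta_pos by (simp add: \<eta>_def)
  have D: "D = (\<eta> - exp \<theta>) * (\<eta> - exp (- \<theta>))"
    using cosh_quadratic_factor[of \<eta> \<theta>] by (simp add: D_def \<sigma> algebra_simps)
  have exp_\<theta>: "exp (- \<theta>) \<le> 1" "1 \<le> exp \<theta>" using theta(1) by auto
  have D_pos: "0 < D" if "\<eta> < exp (- \<theta>)"
    unfolding D using that exp_\<theta> by (intro mult_neg_neg) linarith+
  have \<eta>_le_1: "\<eta> \<le> 1" if "\<eta> \<le> exp (- \<theta>)"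
    using that exp_\<theta> by linarith
  have D_neg_or_gt_1: "D < 0 \<or> 1 < \<eta>" if "exp (- \<theta>) < \<eta>"
    unfolding D using theta(1) that by (rule cosh_quadratic_neg_or_gt_one)
  have "\<sigma> \<le> -1" using \<sigma> cosh_real_ge_1[of \<theta>] by simp
  show ?thesis
    unfolding Let_def \<sigma>_def[symmetric] \<eta>_def[symmetric] D_def[symmetric]
    by (intro conjI impI level_curve_cosh level_curve_exp level_curve_separatrix)
      (use \<eta> \<open>\<sigma> \<le> -1\<close> \<eta>_le_1 D_pos D_neg_or_gt_1 D in auto)
qed

end
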